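(* Let $n,k,l$ be positive integers with $1\le l\le k$ and $l\le n-k$. Then for every $x\in[0,1)$, $$\frac{1-\sum_{i=1}^{l}\binom{n-k}{l-i}x^{(n-k)-(l-i)}(1-x)^{l-i}}{1-\sum_{i=1}^{l}\binom{n}{l-i}x^{n-(l-i)}(1-x)^{l-i}}\ \ge\ \frac{\binom{n-k}{l}}{\binom{n}{l}}.$$
   Context: $\binom{m}{j}$ denotes the binomial coefficient. *)

theory Defs
  imports Complex_Main
begin

end

theory Submission
  imports Defs
begin

text \<open>
  Put \<open>p = 1 - x\<close>. The sum subtracted from \<open>1\<close> is the probability that a binomial
  variable with \<open>N\<close> trials and success probability \<open>p\<close> stays below \<open>l\<close>, so numerator and
  denominator are upper tails. Splitting according to the trial \<open>k + 1\<close> of the \<open>l\<close>-th success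
  writes such a tail as \<open>p^l \<Sum>k<N. (k choose (l-1)) x^(k-l+1)\<close>. Without the weights the
  inner sum is \<open>N choose l\<close>, and the weights decrease in \<open>k\<close>; hence their average over the
  first \<open>n - k\<close> terms is at least their average over all \<open>n\<close> terms, which is the claim.
\<close>

lemma binomial_term_pascal:
  fixes p q :: "'a::comm_ring_1"
  shows "of_nat (Suc N choose Suc i) * q ^ (N - i) * p ^ Suc i =
         q * (of_nat (N choose Suc i) * q ^ (N - Suc i) * p ^ Suc i)
         + p * (of_nat (N choose i) * q ^ (N - i) * p ^ i)"
proof (cases "i < N")
  case True
  then have "q ^ (N - i) = q * q ^ (N - Suc i)"
    by (metis Suc_diff_Suc power_Suc)
  then show ?thesis by (simp add: algebra_simps)
next
  case False
  then have "N choose Suc i = 0" by simp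
  then have "of_nat (N choose Suc i) = (0::'a)" by (simp only: of_nat_0)
  then show ?thesis by (simp add: algebra_simps)
qed

lemma binomial_partial_sum_pascal:
  fixes p q :: "'a::comm_ring_1"
  shows "(\<Sum>j<Suc L. of_nat (Suc N choose j) * q ^ (Suc N - j) * p ^ j) =
         q * (\<Sum>j<Suc L. of_nat (N choose j) * q ^ (N - j) * p ^ j)
         + p * (\<Sum>j<L. of_nat (N choose j) * q ^ (N - j) * p ^ j)"
proof -
  have "(\<Sum>j<Suc L. of_nat (Suc N choose j) * q ^ (Suc N - j) * p ^ j) =
        q ^ Suc N + (\<Sum>i<L. of_nat (Suc N choose Suc i) * q ^ (N - i) * p ^ Suc i)"
    by (subst sum.lessThan_Suc_shift) simp
  also have "\<dots> = q * (q ^ N + (\<Sum>i<L. of_nat (N choose Suc i) * q ^ (N - Suc i) * p ^ Suc i))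
                   + p * (\<Sum>j<L. of_nat (N choose j) * q ^ (N - j) * p ^ j)"
    by (simp only: binomial_term_pascal) (simp add: sum.distrib sum_distrib_left algebra_simps)
  also have "q ^ N + (\<Sum>i<L. of_nat (N choose Suc i) * q ^ (N - Suc i) * p ^ Suc i) =
             (\<Sum>j<Suc L. of_nat (N choose j) * q ^ (N - j) * p ^ j)"
    by (subst sum.lessThan_Suc_shift) simp
  finally show ?thesis .
qed

lemma binomial_upper_tail_eq:
  fixes p q :: "'a::comm_ring_1"
  assumes "p + q = 1"
  shows "1 - (\<Sum>j<Suc L. of_nat (N choose j) * q ^ (N - j) * p ^ j) =
         p ^ Suc L * (\<Sum>k<N. of_nat (k choose L) * q ^ (k - L))"
proof (induction N)
  case 0
  then show ?case by (subst sum.lessThan_Suc_shift) simp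
next
  case (Suc N)
  let ?F = "\<Sum>j<Suc L. of_nat (N choose j) * q ^ (N - j) * p ^ j"
  let ?F' = "\<Sum>j<L. of_nat (N choose j) * q ^ (N - j) * p ^ j"
  have "?F = ?F' + of_nat (N choose L) * q ^ (N - L) * p ^ L"
    by simp
  then have "q * ?F + p * ?F' = (p + q) * ?F - p ^ Suc L * (of_nat (N choose L) * q ^ (N - L))"
    by (simp add: algebra_simps)
  then have "q * ?F + p * ?F' = ?F - p ^ Suc L * (of_nat (N choose L) * q ^ (N - L))"
    by (simp only: assms mult_1_left)
  then have "1 - (\<Sum>j<Suc L. of_nat (Suc N choose j) * q ^ (Suc N - j) * p ^ j) =
             1 - ?F + p ^ Suc L * (of_nat (N choose L) * q ^ (N - L))"
    by (simp only: binomial_partial_sum_pascal diff_diff_eq2 diff_add_eq)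
  also have "\<dots> = p ^ Suc L * (\<Sum>k<Suc N. of_nat (k choose L) * q ^ (k - L))"
    using Suc.IH by (simp add: algebra_simps)
  finally show ?case .
qed

lemma sum_choose_lessThan: "(\<Sum>k<N. k choose L) = N choose Suc L"
proof (cases N)
  case (Suc M)
  then show ?thesis by (simp add: lessThan_Suc_atMost sum_choose_upper)
qed simp

lemma sum_prefix_weighted_ratio_antimono:
  fixes a w :: "nat \<Rightarrow> real"
  assumes "m \<le> n" "antimono w" "\<And>k. 0 \<le> a k"
  shows "(\<Sum>k<n. w k * a k) * (\<Sum>k<m. a k) \<le> (\<Sum>k<m. w k * a k) * (\<Sum>k<n. a k)"
proof -
  have w_le: "w j \<le> w i" if "i \<le> j" for i j
    using assms(2) that by (rule antimonoD)
  have split: "sum f {..<n} = sum f {..<m} + sum f {m..<n}" for f :: "nat \<Rightarrow> real"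
    using assms(1) by (metis atLeast0LessThan le0 sum.atLeastLessThan_concat)
  have head: "w m * (\<Sum>k<m. a k) \<le> (\<Sum>k<m. w k * a k)"
    unfolding sum_distrib_left
    using assms(3) by (intro sum_mono mult_right_mono) (auto intro: w_le)
  have tail: "(\<Sum>k\<in>{m..<n}. w k * a k) \<le> w m * (\<Sum>k\<in>{m..<n}. a k)"
    unfolding sum_distrib_left
    using assms(3) by (intro sum_mono mult_right_mono) (auto intro: w_le)
  have "(\<Sum>k\<in>{m..<n}. w k * a k) * (\<Sum>k<m. a k) \<le> w m * (\<Sum>k\<in>{m..<n}. a k) * (\<Sum>k<m. a k)"
    using tail assms(3) by (intro mult_right_mono sum_nonneg) auto
  also have "\<dots> = w m * (\<Sum>k<m. a k) * (\<Sum>k\<in>{m..<n}. a k)"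
    by (simp only: mult_ac)
  also have "\<dots> \<le> (\<Sum>k<m. w k * a k) * (\<Sum>k\<in>{m..<n}. a k)"
    using head assms(3) by (intro mult_right_mono sum_nonneg) auto
  finally show ?thesis
    unfolding split[of a] split[of "\<lambda>k. w k * a k"] by (simp add: algebra_simps)
qed

theorem lemma6:
  fixes n k l :: nat and x :: real
  assumes "0 < n" "0 < k" "1 \<le> l" "l \<le> k" "l \<le> n - k"
    and "0 \<le> x" "x < 1"
  shows "(1 - (\<Sum>i=1..l. real ((n - k) choose (l - i)) * x ^ ((n - k) - (l - i)) * (1 - x) ^ (l - i)))
         / (1 - (\<Sum>i=1..l. real (n choose (l - i)) * x ^ (n - (l - i)) * (1 - x) ^ (l - i)))
         \<ge> real ((n - k) choose l) / real (n choose l)"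
proof -
  obtain L where l: "l = Suc L"
    using assms(3) by (cases l) auto
  define w :: "nat \<Rightarrow> real" where "w j = x ^ (j - L)" for j
  define a :: "nat \<Rightarrow> real" where "a j = real (j choose L)" for j
  have upper_tail: "1 - (\<Sum>i=1..l. real (N choose (l - i)) * x ^ (N - (l - i)) * (1 - x) ^ (l - i))
                    = (1 - x) ^ l * (\<Sum>j<N. w j * a j)" for N
  proof -
    have "(\<Sum>i=1..l. real (N choose (l - i)) * x ^ (N - (l - i)) * (1 - x) ^ (l - i))
          = (\<Sum>i<Suc L. real (N choose i) * x ^ (N - i) * (1 - x) ^ i)"
      by (rule sum.reindex_bij_witness[of _ "\<lambda>j. l - j" "\<lambda>i. l - i"]) (auto simp: l)
    then show ?thesis
      using binomial_upper_tail_eq[where p="1 - x" and q=x and L=L and N=N]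
      by (simp add: l w_def a_def mult.commute)
  qed
  have count: "(\<Sum>j<N. a j) = real (N choose l)" for N
    unfolding a_def l by (metis of_nat_sum sum_choose_lessThan)
  have "antimono w"
    unfolding w_def using assms(6,7) by (intro antimonoI power_decreasing) auto
  then have "(\<Sum>j<n. w j * a j) * real ((n - k) choose l)
             \<le> (\<Sum>j<n - k. w j * a j) * real (n choose l)"
    using sum_prefix_weighted_ratio_antimono[of "n - k" n w a] unfolding count by (simp add: a_def)
  moreover have "1 \<le> (\<Sum>j<n. w j * a j)"
    using member_le_sum[of L "{..<n}" "\<lambda>j. w j * a j"] assms(4,5,6) l
    by (simp add: w_def a_def)
  moreover have "0 < real (n choose l)"
    using assms(4,5) by simp
  moreover have "0 < (1 - x) ^ l"
    using assms(7) by simp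
  ultimately show ?thesis
    using assms(7) unfolding upper_tail by (simp add: field_simps)
qed

end
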